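(* Let $G=\langle a,b\mid a^n=1,\ b^t=a^k,\ b^{-1}ab=a^r\rangle$ with natural numbers $n,t,k,r$ satisfying $r^t\equiv1\pmod n$ and $k(r-1)\equiv0\pmod n$. Let $(v,i,c)\in\mathfrak{N}$ and $(v,\alpha_1,\beta_1),(v,\alpha_2,\beta_2)\in X_{v,i,c}$. Then $H_{v,\alpha_1,\beta_1o_v}$ and $H_{v,\alpha_2,\beta_2o_v}$ are conjugate in $G$ if and only if $\beta_1=\beta_2$ and $\alpha_1\equiv\alpha_2r^j\pmod v$ for some integer $j$.
   Context: For a divisor $v$ of $n$: $o_v=\operatorname{ord}_v(r)$, $\mathcal{B}_{o_v}=\{(w,i,c)\in\mathbb{Z}^3: w>0,\ w\mid n,\ w\mid r^{o_v}-1,\ o_vc>0,\ o_vc\mid t,\ w\mid k+i\tfrac{t}{o_vc}\}$. For integers $v,i,c$, $H_{v,i,c}=\langle a^v,a^ib^c\rangle$. $\mathfrak{N}=\{(v,i,c)\in\mathbb{Z}^3: v>0,\ v\mid n,\ c>0,\ c\mid t,\ 0\le i\le v-1,\ v\mid k+i\tfrac tc,\ o_v\mid c,\ v\mid i(r-1)\}$. For $(v,i,c)\in\mathfrak{N}$, $X_{v,i,c}$ is the set of $(v,\alpha,\beta)\in\mathcal{B}_{o_v}$ with $\beta o_v\mid c$, $\alpha\frac{c}{\beta o_v}\equiv i\pmod v$, $\beta=\frac{c\gcd(\alpha(r-1),v)}{v\,o_v}$ and $\gcd(v,\alpha,\beta)=1$. *)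

theory Defs
  imports "HOL-Algebra.Algebra" "HOL-Number_Theory.Number_Theory"
begin

text \<open>Under these conditions the presented
  group has order exactly n*t, so G is characterised up to isomorphism as a group generated
  by a, b satisfying the defining relations and having order n*t.\<close>
definition metacyclic_pres ::
  "('g, 'm) monoid_scheme \<Rightarrow> 'g \<Rightarrow> 'g \<Rightarrow> nat \<Rightarrow> nat \<Rightarrow> nat \<Rightarrow> nat \<Rightarrow> bool" where
  "metacyclic_pres G a b n t k r \<longleftrightarrow>
     group G \<and> a \<in> carrier G \<and> b \<in> carrier G \<and>
     generate G {a, b} = carrier G \<and>
     a [^]\<^bsub>G\<^esub> n = \<one>\<^bsub>G\<^esub> \<and>
     b [^]\<^bsub>G\<^esub> t = a [^]\<^bsub>G\<^esub> k \<and>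
     inv\<^bsub>G\<^esub> b \<otimes>\<^bsub>G\<^esub> a \<otimes>\<^bsub>G\<^esub> b = a [^]\<^bsub>G\<^esub> r \<and>
     finite (carrier G) \<and> card (carrier G) = n * t"

definition o_ord :: "nat \<Rightarrow> int \<Rightarrow> int" where
  "o_ord r v = int (ord (nat v) r)"

definition B_set :: "nat \<Rightarrow> nat \<Rightarrow> nat \<Rightarrow> nat \<Rightarrow> int \<Rightarrow> (int \<times> int \<times> int) set" where
  "B_set n t k r ov = {(w, i, c). w > 0 \<and> w dvd int n \<and> w dvd int r ^ nat ov - 1 \<and>
       ov * c > 0 \<and> ov * c dvd int t \<and> w dvd int k + i * (int t div (ov * c))}"

definition H_sub :: "('g, 'm) monoid_scheme \<Rightarrow> 'g \<Rightarrow> 'g \<Rightarrow> int \<Rightarrow> int \<Rightarrow> int \<Rightarrow> 'g set" where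
  "H_sub G a b v i c =
     generate G {a [^]\<^bsub>G\<^esub> v, a [^]\<^bsub>G\<^esub> i \<otimes>\<^bsub>G\<^esub> b [^]\<^bsub>G\<^esub> c}"

definition frakN :: "nat \<Rightarrow> nat \<Rightarrow> nat \<Rightarrow> nat \<Rightarrow> (int \<times> int \<times> int) set" where
  "frakN n t k r = {(v, i, c). v > 0 \<and> v dvd int n \<and> c > 0 \<and> c dvd int t \<and>
       0 \<le> i \<and> i \<le> v - 1 \<and> v dvd int k + i * (int t div c) \<and>
       o_ord r v dvd c \<and> v dvd i * (int r - 1)}"

definition X_set :: "nat \<Rightarrow> nat \<Rightarrow> nat \<Rightarrow> nat \<Rightarrow> int \<Rightarrow> int \<Rightarrow> int \<Rightarrow> (int \<times> int \<times> int) set" where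
  "X_set n t k r v i c = {(v', \<alpha>, \<beta>). (v', \<alpha>, \<beta>) \<in> B_set n t k r (o_ord r v) \<and> v' = v \<and>
       \<beta> * o_ord r v dvd c \<and>
       [\<alpha> * (c div (\<beta> * o_ord r v)) = i] (mod v) \<and>
       \<beta> * (v * o_ord r v) = c * gcd (\<alpha> * (int r - 1)) v \<and>
       gcd v (gcd \<alpha> \<beta>) = 1}"

definition conjugate_in :: "('g, 'm) monoid_scheme \<Rightarrow> 'g set \<Rightarrow> 'g set \<Rightarrow> bool" where
  "conjugate_in G H1 H2 \<longleftrightarrow>
     (\<exists>g \<in> carrier G. H2 = (\<lambda>h. g \<otimes>\<^bsub>G\<^esub> h \<otimes>\<^bsub>G\<^esub> inv\<^bsub>G\<^esub> g) ` H1)"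

end

theory Submission
  imports Defs
begin

text \<open>Since |G| = nt, every element of G is a^x b^y, and a^x b^y = a^x' b^y' forces
  y' = y + tq and x = x' + kq (mod n).  Conjugation by b^y multiplies a-exponents by a power
  of r and moves b^c only by a power of a; when v | r^c - 1 and v | k + \<alpha>t/c this shows that
  every element of H_{v,\<alpha>,c} has the form a^x b^{cp} with x = \<alpha>p (mod v).  A conjugate of
  a^\<alpha> b^c is a^Z b^c with Z = \<alpha> r^e (mod v); reading it off in the other subgroup compares
  the exponents of b, and conjugating back compares the exponents of a.  Conversely,
  conjugation by b^{-j} maps H_{v,\<alpha>,c} onto H_{v r^j,\<alpha> r^j,c} = H_{v,\<alpha> r^j,c}.\<close>

lemma dvd_power_minus_one_multiple:
  fixes x v :: int
  assumes "v dvd x ^ c - 1" and "c dvd e"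
  shows "v dvd x ^ e - 1"
proof -
  obtain m where e: "e = c * m" using assms(2) by blast
  have "[x ^ c = 1] (mod v)" using assms(1) by (simp add: cong_iff_dvd_diff)
  then have "[(x ^ c) ^ m = 1 ^ m] (mod v)" by (rule cong_pow)
  then show ?thesis by (simp add: e power_mult cong_iff_dvd_diff)
qed

definition conj_by :: "('g, 'm) monoid_scheme \<Rightarrow> 'g \<Rightarrow> 'g \<Rightarrow> 'g" where
  "conj_by G g h = g \<otimes>\<^bsub>G\<^esub> h \<otimes>\<^bsub>G\<^esub> inv\<^bsub>G\<^esub> g"

lemma conjugate_in_iff_conj_by:
  "conjugate_in G H1 H2 \<longleftrightarrow> (\<exists>g \<in> carrier G. H2 = conj_by G g ` H1)"
  by (simp add: conjugate_in_def conj_by_def[abs_def])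

context group begin

lemma inv_mult_cancel_left [simp]:
  "g \<in> carrier G \<Longrightarrow> z \<in> carrier G \<Longrightarrow> inv g \<otimes> (g \<otimes> z) = z"
  by (simp add: m_assoc[symmetric])

lemma conj_by_hom: "g \<in> carrier G \<Longrightarrow> group_hom G G (conj_by G g)"
  unfolding group_hom_def group_hom_axioms_def hom_def conj_by_def
  by (auto simp: m_assoc)

lemma conj_by_int_pow:
  "g \<in> carrier G \<Longrightarrow> x \<in> carrier G \<Longrightarrow> conj_by G g (x [^] (m::int)) = (conj_by G g x) [^] m"
  using group_hom.hom_int_pow[OF conj_by_hom] by blast

lemma conj_by_mult:
  "g \<in> carrier G \<Longrightarrow> h \<in> carrier G \<Longrightarrow> x \<in> carrier G \<Longrightarrow>
    conj_by G (g \<otimes> h) x = conj_by G g (conj_by G h x)"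
  unfolding conj_by_def by (simp add: m_assoc inv_mult_group)

lemma conj_by_inv_conj_by:
  "g \<in> carrier G \<Longrightarrow> x \<in> carrier G \<Longrightarrow> conj_by G (inv g) (conj_by G g x) = x"
  unfolding conj_by_def by (simp add: m_assoc)

lemma conj_by_generate:
  "g \<in> carrier G \<Longrightarrow> K \<subseteq> carrier G \<Longrightarrow> conj_by G g ` generate G K = generate G (conj_by G g ` K)"
  using group_hom.generate_img[OF conj_by_hom] by metis

lemma conj_by_image_inv:
  assumes "g \<in> carrier G" and "H \<subseteq> carrier G" and "K = conj_by G g ` H"
  shows "H = conj_by G (inv g) ` K"
  using assms by (force simp: image_image conj_by_inv_conj_by)

lemma conj_by_commuting:
  "g \<in> carrier G \<Longrightarrow> x \<in> carrier G \<Longrightarrow> g \<otimes> x = x \<otimes> g \<Longrightarrow> conj_by G g x = x"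
  unfolding conj_by_def by (metis inv_solve_right m_closed)

end

text \<open>The conditions defining B_{o_v}, in terms of c = \<beta> o_v.\<close>
definition admissible :: "nat \<Rightarrow> nat \<Rightarrow> nat \<Rightarrow> nat \<Rightarrow> int \<Rightarrow> int \<Rightarrow> int \<Rightarrow> bool" where
  "admissible n t k r v \<alpha> c \<longleftrightarrow> c > 0 \<and> c dvd int t \<and> v dvd int n \<and>
     v dvd int r ^ nat c - 1 \<and> v dvd int k + \<alpha> * (int t div c)"

lemma B_set_admissible:
  assumes "(v, \<alpha>, \<beta>) \<in> B_set n t k r ov" and "0 \<le> ov"
  shows "admissible n t k r v \<alpha> (\<beta> * ov)"
proof -
  have B: "v dvd int n" "v dvd int r ^ nat ov - 1" "ov * \<beta> > 0" "ov * \<beta> dvd int t"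
      "v dvd int k + \<alpha> * (int t div (ov * \<beta>))"
    using assms(1) by (simp_all add: B_set_def)
  have "\<beta> > 0" using B(3) assms(2) by (simp add: zero_less_mult_iff)
  then have "nat ov dvd nat (\<beta> * ov)" using assms(2) by (simp add: nat_mult_distrib)
  then have "v dvd int r ^ nat (\<beta> * ov) - 1"
    using B(2) by (rule dvd_power_minus_one_multiple[rotated])
  then show ?thesis using B by (simp add: admissible_def mult.commute)
qed

locale metacyclic_group = group G for G (structure) +
  fixes a b and n t k r :: nat
  assumes a: "a \<in> carrier G" and b: "b \<in> carrier G"
    and gen: "generate G {a, b} = carrier G"
    and a_pow_n: "a [^] (int n) = \<one>"
    and b_pow_t: "b [^] (int t) = a [^] (int k)"
    and conj_a: "inv b \<otimes> a \<otimes> b = a [^] (int r)"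
    and card: "card (carrier G) = n * t"
    and n_pos: "n > 0" and t_pos: "t > 0"

lemma metacyclic_groupI:
  "metacyclic_pres G a b n t k r \<Longrightarrow> n > 0 \<Longrightarrow> t > 0 \<Longrightarrow> metacyclic_group G a b n t k r"
  unfolding metacyclic_group_def metacyclic_group_axioms_def metacyclic_pres_def
  by (auto simp: int_pow_int)

context metacyclic_group begin

lemma a_pow_mod: "int n dvd x - y \<Longrightarrow> a [^] (x::int) = a [^] y"
proof -
  assume "int n dvd x - y"
  then obtain q where "x = y + int n * q" by (metis dvd_def eq_diff_eq add.commute)
  then have "a [^] x = a [^] y \<otimes> (a [^] int n) [^] q" by (simp add: a int_pow_mult int_pow_pow)
  then show ?thesis by (simp add: a_pow_n a)
qed

lemma a_pow_mult [simp]: "a [^] (x::int) \<otimes> a [^] (y::int) = a [^] (x + y)"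
  by (simp add: a int_pow_mult)

lemma a_pow_mult_left [simp]:
  "z \<in> carrier G \<Longrightarrow> a [^] (x::int) \<otimes> (a [^] (y::int) \<otimes> z) = a [^] (x + y) \<otimes> z"
  by (simp add: a m_assoc[symmetric])

lemma b_pow_mult [simp]: "b [^] (x::int) \<otimes> b [^] (y::int) = b [^] (x + y)"
  by (simp add: b int_pow_mult)

lemma b_pow_mult_left [simp]:
  "z \<in> carrier G \<Longrightarrow> b [^] (x::int) \<otimes> (b [^] (y::int) \<otimes> z) = b [^] (x + y) \<otimes> z"
  by (simp add: b m_assoc[symmetric])

lemma inv_a_pow [simp]: "inv (a [^] (x::int)) = a [^] (- x)"
  by (simp add: a int_pow_neg)

lemma inv_b_pow [simp]: "inv (b [^] (x::int)) = b [^] (- x)"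
  by (simp add: b int_pow_neg)

lemma a_pow_closed [simp]: "a [^] (x::int) \<in> carrier G"
  by (simp add: a)

lemma b_pow_closed [simp]: "b [^] (x::int) \<in> carrier G"
  by (simp add: b)

lemma b_pow_t_mult: "b [^] (int t * q) = a [^] (int k * q)"
  by (metis a b b_pow_t int_pow_pow)

lemma conj_by_inv_b_pow_a: "conj_by G (inv (b [^] (m::nat))) a = a [^] (int r ^ m)"
proof (induction m)
  case 0
  show ?case by (simp add: conj_by_def a)
next
  case (Suc m)
  have "inv (b [^] Suc m) = inv b \<otimes> inv (b [^] m)" by (simp add: b inv_mult_group)
  then have "conj_by G (inv (b [^] Suc m)) a = conj_by G (inv b) (a [^] (int r ^ m))"
    using Suc by (simp add: conj_by_mult b a)
  also have "\<dots> = (conj_by G (inv b) a) [^] (int r ^ m)" by (simp add: conj_by_int_pow a b)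
  also have "\<dots> = a [^] (int r ^ Suc m)"
    using conj_a by (simp add: conj_by_def b a int_pow_pow mult.commute)
  finally show ?case .
qed

lemma conj_by_b_pow_t_mult: "conj_by G (b [^] (t * m)) a = a"
proof -
  have "b [^] (t * m) = a [^] (k * m)"
    using b_pow_t_mult[of "int m"] by (simp add: int_pow_int[symmetric])
  then show ?thesis
    using conj_by_commuting[OF nat_pow_closed[OF a] a group_commutes_pow[OF refl a a]] by simp
qed

text \<open>b^y a b^{-y} = a^{conj_exp y}; for y \<ge> 0 one inverts r through r^t = 1 (mod n), which
  holds because b^t = a^k commutes with a.\<close>
definition conj_exp :: "int \<Rightarrow> int" where
  "conj_exp y = (if y \<ge> 0 then int r ^ ((t - 1) * nat y) else int r ^ nat (- y))"

lemma conj_exp_neg: "conj_exp (- int j) = int r ^ j"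
  by (cases "j = 0") (simp_all add: conj_exp_def)

lemma conj_exp_is_power: "\<exists>e. conj_exp y = int r ^ e"
  by (simp add: conj_exp_def) blast

lemma conj_by_b_pow_a: "conj_by G (b [^] (y::int)) a = a [^] conj_exp y"
proof (cases "y \<ge> 0")
  case False
  then have "b [^] nat (- y) = b [^] (- y)" by simp
  then have "conj_by G (b [^] y) a = conj_by G (inv (b [^] nat (- y))) a" by simp
  also have "\<dots> = a [^] (int r ^ nat (- y))" by (rule conj_by_inv_b_pow_a)
  finally show ?thesis using False by (simp add: conj_exp_def)
next
  case True
  define m where "m = nat y"
  have "(t - 1) * m + m = t * m" using t_pos by (cases t) auto
  then have "b [^] ((t - 1) * m) \<otimes> b [^] m = b [^] (t * m)" by (metis b nat_pow_mult)
  then have "b [^] y = inv (b [^] ((t - 1) * m)) \<otimes> b [^] (t * m)"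
    using True by (metis b inv_solve_left m_def nat_pow_closed pow_nat)
  then have "conj_by G (b [^] y) a = conj_by G (inv (b [^] ((t - 1) * m))) a"
    by (simp add: conj_by_mult conj_by_b_pow_t_mult a b)
  then show ?thesis using True conj_by_inv_b_pow_a by (simp add: conj_exp_def m_def)
qed

lemma conj_by_b_pow_a_pow: "conj_by G (b [^] (y::int)) (a [^] (x::int)) = a [^] (x * conj_exp y)"
  by (simp add: conj_by_int_pow conj_by_b_pow_a a int_pow_pow mult.commute)

lemma b_pow_a_pow_commute [simp]:
  "b [^] (y::int) \<otimes> a [^] (x::int) = a [^] (x * conj_exp y) \<otimes> b [^] y"
proof -
  have "b [^] y \<otimes> a [^] x \<otimes> inv (b [^] y) = a [^] (x * conj_exp y)"
    using conj_by_b_pow_a_pow by (simp add: conj_by_def)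
  then show ?thesis by (metis a_pow_closed b_pow_closed inv_solve_right m_closed inv_b_pow)
qed

lemma b_pow_a_pow_commute_left [simp]:
  "z \<in> carrier G \<Longrightarrow>
    b [^] (y::int) \<otimes> (a [^] (x::int) \<otimes> z) = a [^] (x * conj_exp y) \<otimes> (b [^] y \<otimes> z)"
  by (simp add: m_assoc[symmetric])

lemma conj_exp_cong_one:
  assumes "c > 0" "v dvd int r ^ nat c - 1" "c dvd y"
  shows "v dvd conj_exp y - 1"
proof (cases "y \<ge> 0")
  case True
  have "nat c dvd (t - 1) * nat y" using assms True by (simp add: nat_dvd_iff)
  then show ?thesis using dvd_power_minus_one_multiple[OF assms(2)] True by (simp add: conj_exp_def)
next
  case False
  have "nat c dvd nat (- y)" using assms False by (simp add: nat_dvd_iff)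
  then show ?thesis using dvd_power_minus_one_multiple[OF assms(2)] False by (simp add: conj_exp_def)
qed

lemma conj_by_b_pow_generator:
  "conj_by G (b [^] (y::int)) (a [^] (x::int) \<otimes> b [^] (c::int)) = a [^] (x * conj_exp y) \<otimes> b [^] c"
  by (simp add: conj_by_def m_assoc)

definition H_exp :: "int \<Rightarrow> int \<Rightarrow> int \<Rightarrow> 'a set" where
  "H_exp v \<alpha> c = {z. \<exists>x p. z = a [^] (x::int) \<otimes> b [^] (c * p) \<and> v dvd x - \<alpha> * p}"

lemma subgroup_H_exp:
  assumes c: "c > 0" and vr: "v dvd int r ^ nat c - 1"
  shows "subgroup (H_exp v \<alpha> c) G"
proof (rule subgroupI)
  show "H_exp v \<alpha> c \<subseteq> carrier G" by (auto simp: H_exp_def)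
  have "a [^] (0::int) \<otimes> b [^] (c * 0) \<in> H_exp v \<alpha> c"
    unfolding H_exp_def by (rule CollectI, rule exI[of _ 0], rule exI[of _ 0]) simp
  then show "H_exp v \<alpha> c \<noteq> {}" by blast
next
  fix z assume "z \<in> H_exp v \<alpha> c"
  then obtain x p where z: "z = a [^] x \<otimes> b [^] (c * p)" and d: "v dvd x - \<alpha> * p"
    by (auto simp: H_exp_def)
  let ?s = "conj_exp (- (c * p))"
  have "inv z = a [^] (- x * ?s) \<otimes> b [^] (c * - p)" by (simp add: z inv_mult_group)
  moreover have "v dvd ?s - 1" by (rule conj_exp_cong_one[OF c vr]) simp
  then have "v dvd - (x - \<alpha> * p) - x * (?s - 1)" using d by (metis dvd_diff dvd_minus_iff dvd_mult)
  then have "v dvd - x * ?s - \<alpha> * - p" by (simp add: algebra_simps)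
  ultimately show "inv z \<in> H_exp v \<alpha> c" unfolding H_exp_def by blast
next
  fix z1 z2 assume "z1 \<in> H_exp v \<alpha> c" "z2 \<in> H_exp v \<alpha> c"
  then obtain x1 p1 x2 p2 where z1: "z1 = a [^] x1 \<otimes> b [^] (c * p1)" "v dvd x1 - \<alpha> * p1"
     and z2: "z2 = a [^] x2 \<otimes> b [^] (c * p2)" "v dvd x2 - \<alpha> * p2"
    by (auto simp: H_exp_def)
  let ?s = "conj_exp (c * p1)"
  have "z1 \<otimes> z2 = a [^] (x1 + x2 * ?s) \<otimes> b [^] (c * (p1 + p2))"
    by (simp add: z1 z2 m_assoc distrib_left)
  moreover have "v dvd ?s - 1" by (rule conj_exp_cong_one[OF c vr]) simp
  then have "v dvd (x1 - \<alpha> * p1) + (x2 - \<alpha> * p2) + x2 * (?s - 1)" using z1 z2 by simp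
  then have "v dvd x1 + x2 * ?s - \<alpha> * (p1 + p2)" by (simp add: algebra_simps)
  ultimately show "z1 \<otimes> z2 \<in> H_exp v \<alpha> c" unfolding H_exp_def by blast
qed

lemma exists_normal_form:
  assumes "z \<in> carrier G"
  shows "\<exists>x y. z = a [^] (x::int) \<otimes> b [^] (y::int)"
proof -
  have "a \<in> H_exp 1 0 1"
    unfolding H_exp_def by (rule CollectI, rule exI[of _ 1], rule exI[of _ 0]) (simp add: a)
  moreover have "b \<in> H_exp 1 0 1"
    unfolding H_exp_def by (rule CollectI, rule exI[of _ 0], rule exI[of _ 1]) (simp add: b)
  ultimately have "generate G {a, b} \<subseteq> H_exp 1 0 1"
    by (intro generate_subgroup_incl subgroup_H_exp) auto
  then show ?thesis using assms gen by (auto simp: H_exp_def)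
qed

lemma b_pow_div_mod: "b [^] (w::int) = a [^] (int k * (w div int t)) \<otimes> b [^] (w mod int t)"
proof -
  have "b [^] w = b [^] (int t * (w div int t)) \<otimes> b [^] (w mod int t)"
    by (metis b int_pow_mult mult_div_mod_eq)
  then show ?thesis by (simp add: b_pow_t_mult)
qed

lemma a_pow_mod_n: "a [^] (x::int) = a [^] (x mod int n)"
  by (rule a_pow_mod) (simp add: mod_eq_dvd_iff[symmetric])

lemma exists_reduced_normal_form:
  assumes "z \<in> carrier G"
  shows "\<exists>x y. z = a [^] x \<otimes> b [^] y \<and> (x, y) \<in> {0..<int n} \<times> {0..<int t}"
proof -
  obtain x y where z: "z = a [^] (x::int) \<otimes> b [^] (y::int)" using exists_normal_form[OF assms] by blast
  define w where "w = x + int k * (y div int t)"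
  have "z = a [^] w \<otimes> b [^] (y mod int t)" unfolding z w_def by (subst b_pow_div_mod) simp
  then have "z = a [^] (w mod int n) \<otimes> b [^] (y mod int t)" by (simp only: a_pow_mod_n[of w])
  then show ?thesis using n_pos t_pos by force
qed

lemma inj_on_normal_form:
  "inj_on (\<lambda>(x, y). a [^] (x::int) \<otimes> b [^] (y::int)) ({0..<int n} \<times> {0..<int t})"
proof -
  let ?f = "\<lambda>(x, y). a [^] (x::int) \<otimes> b [^] (y::int)"
  let ?A = "{0..<int n} \<times> {0..<int t}"
  have "?f ` ?A = carrier G"
    using exists_reduced_normal_form by fastforce
  then have "card (?f ` ?A) = card ?A" using card by (simp add: card_cartesian_product)
  then show ?thesis by (simp add: inj_on_iff_eq_card)
qed

lemma normal_form_eq: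
  assumes "a [^] (x'::int) \<otimes> b [^] (y'::int) = a [^] (x::int) \<otimes> b [^] (y::int)"
  shows "\<exists>q. y' - y = int t * q \<and> int n dvd x' - x + int k * q"
proof -
  define q where "q = (y' - y) div int t"
  define d where "d = (y' - y) mod int t"
  have "a [^] (- x') \<otimes> (a [^] x' \<otimes> b [^] y') \<otimes> b [^] (- y) =
      a [^] (- x') \<otimes> (a [^] x \<otimes> b [^] y) \<otimes> b [^] (- y)"
    by (simp only: assms)
  then have "b [^] (y' - y) = a [^] (x - x')" by (simp add: m_assoc)
  then have "a [^] (int k * q) \<otimes> b [^] d = a [^] (x - x') \<otimes> b [^] (0::int)"
    using b_pow_div_mod[of "y' - y"] by (simp add: q_def d_def)
  then have "(\<lambda>(x, y). a [^] (x::int) \<otimes> b [^] (y::int)) ((int k * q) mod int n, d)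
      = (\<lambda>(x, y). a [^] (x::int) \<otimes> b [^] (y::int)) ((x - x') mod int n, 0)"
    by (simp only: a_pow_mod_n[symmetric] case_prod_conv)
  moreover have "((int k * q) mod int n, d) \<in> {0..<int n} \<times> {0..<int t}"
    "((x - x') mod int n, 0) \<in> {0..<int n} \<times> {0..<int t}"
    using n_pos t_pos by (simp_all add: d_def)
  ultimately have "(int k * q) mod int n = (x - x') mod int n" "d = 0"
    using inj_on_normal_form unfolding inj_on_def by blast+
  then have "y' - y = int t * q" "int n dvd int k * q - (x - x')"
    by (auto simp: q_def d_def mod_eq_dvd_iff mult_div_mod_eq)
  then show ?thesis by (metis diff_diff_eq2 diff_add_eq add.commute)
qed

lemma r_pow_t_cong_one: "int n dvd int r ^ t - 1"
proof -
  have "conj_by G (b [^] t) a = a" using conj_by_b_pow_t_mult[of 1] by simp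
  then have "a [^] (int r ^ t) = conj_by G (inv (b [^] t)) (conj_by G (b [^] t) a)"
    by (simp only: conj_by_inv_b_pow_a)
  also have "\<dots> = a" by (rule conj_by_inv_conj_by) (simp_all add: a b)
  finally have "a [^] (int r ^ t) \<otimes> b [^] (0::int) = a [^] (1::int) \<otimes> b [^] (0::int)"
    by (simp add: a)
  then obtain q where "0 - 0 = int t * q" "int n dvd int r ^ t - 1 + int k * q"
    by (blast dest: normal_form_eq)
  then show ?thesis using t_pos by simp
qed

lemma H_sub_closed: "H_sub G a b v \<alpha> c \<subseteq> carrier G"
  unfolding H_sub_def by (rule generate_incl) auto

lemma H_sub_mem_exponents:
  assumes adm: "admissible n t k r v \<alpha> c"
    and mem: "a [^] x \<otimes> b [^] y \<in> H_sub G a b v \<alpha> c"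
  shows "c dvd y \<and> v dvd x - \<alpha> * (y div c)"
proof -
  have c: "c > 0" "c dvd int t" and v: "v dvd int n" "v dvd int r ^ nat c - 1"
    and vk: "v dvd int k + \<alpha> * (int t div c)"
    using adm by (simp_all add: admissible_def)
  have "a [^] v \<in> H_exp v \<alpha> c"
    unfolding H_exp_def by (rule CollectI, rule exI[of _ v], rule exI[of _ 0]) simp
  moreover have "a [^] \<alpha> \<otimes> b [^] c \<in> H_exp v \<alpha> c"
    unfolding H_exp_def by (rule CollectI, rule exI[of _ \<alpha>], rule exI[of _ 1]) simp
  ultimately have "H_sub G a b v \<alpha> c \<subseteq> H_exp v \<alpha> c"
    unfolding H_sub_def by (intro generate_subgroup_incl subgroup_H_exp c v) auto
  with mem obtain x' p where e: "a [^] x \<otimes> b [^] y = a [^] x' \<otimes> b [^] (c * p)"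
    and d: "v dvd x' - \<alpha> * p"
    by (auto simp: H_exp_def)
  obtain q where q: "y - c * p = int t * q" and nq: "int n dvd x - x' + int k * q"
    using normal_form_eq[OF e] by blast
  obtain s where s: "int t = c * s" using c(2) by blast
  have y: "y = c * (p + s * q)" using q s by (simp add: algebra_simps)
  have "int t div c = s" using s c(1) by simp
  then have "v dvd (x - x' + int k * q) + (x' - \<alpha> * p) - q * (int k + \<alpha> * s)"
    using dvd_trans[OF v(1) nq] d vk by (metis dvd_add dvd_diff dvd_mult)
  then have "v dvd x - \<alpha> * (p + s * q)" by (simp add: algebra_simps)
  then show ?thesis using y c(1) by simp
qed

lemma conj_by_generator:
  assumes g: "g \<in> carrier G" and c: "c > 0" "v dvd int r ^ nat c - 1"
  shows "\<exists>Z e. conj_by G g (a [^] \<alpha> \<otimes> b [^] c) = a [^] Z \<otimes> b [^] c \<and> v dvd Z - \<alpha> * int r ^ e"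
proof -
  obtain x y where g_eq: "g = a [^] (x::int) \<otimes> b [^] (y::int)"
    using exists_normal_form[OF g] by blast
  obtain e where e: "conj_exp y = int r ^ e" using conj_exp_is_power by blast
  have "conj_by G g (a [^] \<alpha> \<otimes> b [^] c) = conj_by G (a [^] x) (a [^] (\<alpha> * conj_exp y) \<otimes> b [^] c)"
    by (simp add: g_eq conj_by_mult conj_by_b_pow_generator)
  also have "\<dots> = a [^] (x + \<alpha> * conj_exp y - x * conj_exp c) \<otimes> b [^] c"
    by (simp add: conj_by_def m_assoc)
  finally have conj: "conj_by G g (a [^] \<alpha> \<otimes> b [^] c) =
      a [^] (x + \<alpha> * conj_exp y - x * conj_exp c) \<otimes> b [^] c" .
  have "v dvd conj_exp c - 1" by (rule conj_exp_cong_one[OF c]) simp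
  then have "v dvd - (x * (conj_exp c - 1))" by simp
  then have "v dvd x + \<alpha> * conj_exp y - x * conj_exp c - \<alpha> * int r ^ e"
    using e by (simp add: algebra_simps)
  then show ?thesis using conj by blast
qed

lemma conj_by_H_sub_subset:
  assumes g: "g \<in> carrier G"
    and adm: "admissible n t k r v \<alpha> c" and adm': "admissible n t k r v \<alpha>' c'"
    and sub: "conj_by G g ` H_sub G a b v \<alpha> c \<subseteq> H_sub G a b v \<alpha>' c'"
  shows "c' dvd c \<and> (\<exists>e. v dvd \<alpha>' * (c div c') - \<alpha> * int r ^ e)"
proof -
  have "c > 0" "v dvd int r ^ nat c - 1" using adm by (simp_all add: admissible_def)
  then obtain Z e where Z: "conj_by G g (a [^] \<alpha> \<otimes> b [^] c) = a [^] Z \<otimes> b [^] c"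
    and e: "v dvd Z - \<alpha> * int r ^ e"
    using conj_by_generator[OF g] by blast
  have "a [^] \<alpha> \<otimes> b [^] c \<in> H_sub G a b v \<alpha> c"
    unfolding H_sub_def by (rule generate.incl) simp
  then have "a [^] Z \<otimes> b [^] c \<in> H_sub G a b v \<alpha>' c'" using sub Z by (metis image_subset_iff)
  then have "c' dvd c" and Z': "v dvd Z - \<alpha>' * (c div c')"
    using H_sub_mem_exponents[OF adm'] by auto
  moreover have "v dvd \<alpha>' * (c div c') - \<alpha> * int r ^ e"
    using dvd_diff[OF e Z'] by simp
  ultimately show ?thesis by blast
qed

lemma conjugate_H_sub_imp:
  assumes adm1: "admissible n t k r v \<alpha>1 c1" and adm2: "admissible n t k r v \<alpha>2 c2"
    and "conjugate_in G (H_sub G a b v \<alpha>1 c1) (H_sub G a b v \<alpha>2 c2)"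
  shows "c1 = c2 \<and> (\<exists>j. [\<alpha>1 = \<alpha>2 * int r ^ j] (mod v))"
proof -
  obtain g where g: "g \<in> carrier G"
    and H2: "H_sub G a b v \<alpha>2 c2 = conj_by G g ` H_sub G a b v \<alpha>1 c1"
    using assms(3) unfolding conjugate_in_iff_conj_by by blast
  have H1: "H_sub G a b v \<alpha>1 c1 = conj_by G (inv g) ` H_sub G a b v \<alpha>2 c2"
    using g H_sub_closed H2 by (rule conj_by_image_inv)
  have "c2 dvd c1"
    using conj_by_H_sub_subset[OF g adm1 adm2] H2 by simp
  moreover obtain e where "c1 dvd c2" and e: "v dvd \<alpha>1 * (c2 div c1) - \<alpha>2 * int r ^ e"
    using conj_by_H_sub_subset[OF inv_closed[OF g] adm2 adm1] H1 by auto
  moreover have "c1 > 0" "c2 > 0" using adm1 adm2 by (simp_all add: admissible_def)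
  ultimately have c: "c1 = c2" by (intro zdvd_antisym_nonneg) auto
  with e \<open>c1 > 0\<close> have "v dvd \<alpha>1 - \<alpha>2 * int r ^ e" by simp
  with c show ?thesis unfolding cong_iff_dvd_diff by blast
qed

lemma H_sub_scale:
  assumes vx: "v dvd x - x'" and ss': "[s * s' = 1] (mod int n)"
  shows "H_sub G a b (v * s) x c = H_sub G a b v x' c"
proof -
  let ?L = "H_sub G a b (v * s) x c"
  let ?R = "H_sub G a b v x' c"
  have L: "subgroup ?L G" and R: "subgroup ?R G"
    unfolding H_sub_def by (auto intro: generate_is_subgroup)
  obtain q where q: "x = v * q + x'" using vx by (metis dvd_def diff_eq_eq add.commute)
  have "int n dvd v * (s * s' - 1)" using ss' by (simp add: cong_iff_dvd_diff)
  then have a_vss': "a [^] (v * s * s') = a [^] v" by (intro a_pow_mod) (simp add: algebra_simps)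
  have av_R: "a [^] v \<in> ?R" unfolding H_sub_def by (rule generate.incl) simp
  have av_L: "a [^] v \<in> ?L"
  proof -
    have "a [^] (v * s) \<in> ?L" unfolding H_sub_def by (rule generate.incl) simp
    then have "(a [^] (v * s)) [^] s' \<in> ?L" by (rule subgroup_int_pow_closed[OF L])
    then show ?thesis using a_vss' by (simp add: a int_pow_pow)
  qed
  have gen_R: "a [^] x' \<otimes> b [^] c \<in> ?R" unfolding H_sub_def by (rule generate.incl) simp
  have gen_L: "a [^] x \<otimes> b [^] c \<in> ?L" unfolding H_sub_def by (rule generate.incl) simp
  show ?thesis
  proof
    have "(a [^] v) [^] s \<in> ?R" "(a [^] v) [^] q \<otimes> (a [^] x' \<otimes> b [^] c) \<in> ?R"
      using av_R gen_R by (auto intro: subgroup_int_pow_closed[OF R] subgroup.m_closed[OF R])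
    then show "?L \<subseteq> ?R"
      unfolding H_sub_def[of G a b "v * s"] using q
      by (intro generate_subgroup_incl[OF _ R]) (auto simp: a int_pow_pow)
  next
    have "(a [^] v) [^] (- q) \<otimes> (a [^] x \<otimes> b [^] c) \<in> ?L"
      using av_L gen_L by (auto intro: subgroup_int_pow_closed[OF L] subgroup.m_closed[OF L])
    then show "?R \<subseteq> ?L"
      unfolding H_sub_def[of G a b v] using q av_L
      by (intro generate_subgroup_incl[OF _ L]) (auto simp: a int_pow_pow)
  qed
qed

lemma conjugate_H_sub_if:
  assumes "[\<alpha>1 = \<alpha>2 * int r ^ j] (mod v)"
  shows "conjugate_in G (H_sub G a b v \<alpha>1 c) (H_sub G a b v \<alpha>2 c)"
proof -
  let ?g = "b [^] (- int j)"
  have "conj_by G ?g ` {a [^] v, a [^] \<alpha>2 \<otimes> b [^] c} =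
      {a [^] (v * int r ^ j), a [^] (\<alpha>2 * int r ^ j) \<otimes> b [^] c}"
    by (simp only: image_insert image_empty conj_by_b_pow_a_pow conj_by_b_pow_generator conj_exp_neg)
  then have "conj_by G ?g ` H_sub G a b v \<alpha>2 c = H_sub G a b (v * int r ^ j) (\<alpha>2 * int r ^ j) c"
    unfolding H_sub_def by (subst conj_by_generate) auto
  also have "\<dots> = H_sub G a b v \<alpha>1 c"
  proof (rule H_sub_scale)
    show "v dvd \<alpha>2 * int r ^ j - \<alpha>1" using assms by (simp add: cong_iff_dvd_diff dvd_diff_commute)
    have "int n dvd int r ^ (t * j) - 1"
      using r_pow_t_cong_one by (rule dvd_power_minus_one_multiple) simp
    moreover have "int r ^ j * int r ^ ((t - 1) * j) = int r ^ (t * j)"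
      using t_pos by (simp add: power_add[symmetric] algebra_simps)
    ultimately show "[int r ^ j * int r ^ ((t - 1) * j) = 1] (mod int n)"
      by (simp add: cong_iff_dvd_diff)
  qed
  finally have "H_sub G a b v \<alpha>1 c = conj_by G ?g ` H_sub G a b v \<alpha>2 c" by (rule sym)
  then have "H_sub G a b v \<alpha>2 c = conj_by G (inv ?g) ` H_sub G a b v \<alpha>1 c"
    by (rule conj_by_image_inv[OF b_pow_closed H_sub_closed])
  then show ?thesis unfolding conjugate_in_iff_conj_by using inv_closed[OF b_pow_closed] by blast
qed

theorem conjugate_H_sub_iff:
  assumes B1: "(v, \<alpha>1, \<beta>1) \<in> B_set n t k r ov" and B2: "(v, \<alpha>2, \<beta>2) \<in> B_set n t k r ov"
    and ov: "0 \<le> ov"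
  shows "conjugate_in G (H_sub G a b v \<alpha>1 (\<beta>1 * ov)) (H_sub G a b v \<alpha>2 (\<beta>2 * ov))
     \<longleftrightarrow> \<beta>1 = \<beta>2 \<and> (\<exists>j::nat. [\<alpha>1 = \<alpha>2 * int r ^ j] (mod v))"
proof
  have adm1: "admissible n t k r v \<alpha>1 (\<beta>1 * ov)" and adm2: "admissible n t k r v \<alpha>2 (\<beta>2 * ov)"
    using B1 B2 ov by (simp_all add: B_set_admissible)
  assume "conjugate_in G (H_sub G a b v \<alpha>1 (\<beta>1 * ov)) (H_sub G a b v \<alpha>2 (\<beta>2 * ov))"
  from conjugate_H_sub_imp[OF adm1 adm2 this]
  have "\<beta>1 * ov = \<beta>2 * ov" and "\<exists>j. [\<alpha>1 = \<alpha>2 * int r ^ j] (mod v)" by auto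
  moreover have "ov \<noteq> 0" using adm1 by (auto simp: admissible_def)
  ultimately show "\<beta>1 = \<beta>2 \<and> (\<exists>j. [\<alpha>1 = \<alpha>2 * int r ^ j] (mod v))" by simp
next
  show "\<beta>1 = \<beta>2 \<and> (\<exists>j. [\<alpha>1 = \<alpha>2 * int r ^ j] (mod v)) \<Longrightarrow>
      conjugate_in G (H_sub G a b v \<alpha>1 (\<beta>1 * ov)) (H_sub G a b v \<alpha>2 (\<beta>2 * ov))"
    using conjugate_H_sub_if by blast
qed

end

theorem lemma3:
  fixes G :: "('g, 'm) monoid_scheme" and a b :: 'g and n t k r :: nat
    and v i c \<alpha>1 \<beta>1 \<alpha>2 \<beta>2 :: int
  assumes "n > 0" and "t > 0"
    and "metacyclic_pres G a b n t k r"
    and "[r ^ t = 1] (mod n)"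
    and "[int k * (int r - 1) = 0] (mod int n)"
    and "(v, i, c) \<in> frakN n t k r"
    and "(v, \<alpha>1, \<beta>1) \<in> X_set n t k r v i c"
    and "(v, \<alpha>2, \<beta>2) \<in> X_set n t k r v i c"
  shows "conjugate_in G (H_sub G a b v \<alpha>1 (\<beta>1 * o_ord r v)) (H_sub G a b v \<alpha>2 (\<beta>2 * o_ord r v))
     \<longleftrightarrow> \<beta>1 = \<beta>2 \<and> (\<exists>j::nat. [\<alpha>1 = \<alpha>2 * int r ^ j] (mod v))"
proof -
  interpret metacyclic_group G a b n t k r
    using assms(3,1,2) by (rule metacyclic_groupI)
  show ?thesis
    using assms(7,8) by (intro conjugate_H_sub_iff) (simp_all add: X_set_def o_ord_def)
qed

end
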